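(* Let $P(s),C(s)$ be $n\times n$ real rational proper transfer function matrices with no poles in the closed right half-plane, such that the feedback system of $P$ and $C$ is well-posed. If $\theta_\infty(P)+\theta_\infty(C)<\pi$, then the feedback system is stable, i.e., $(I+C(s)P(s))^{-1}$ is proper with no poles in the closed right half-plane.
   Context: For a nonzero $A\in\mathbb{C}^{n\times n}$, $\theta(A)\in[0,\pi]$ is defined by $\cos\theta(A)=\inf\{\mathrm{Re}(x^*Ax)/(|x|\,|Ax|):0\ne x\in\mathbb{C}^n,\ Ax\ne0\}$, and $\theta(0):=0$. The $\mathcal{H}_\infty$ singular angle of $P$ is $\theta_\infty(P)=\sup_{\omega\in[-\infty,\infty]}\theta(P(j\omega))$, with $P(j\pm\infty)=\lim_{\omega\to\pm\infty}P(j\omega)$. The feedback system (with $u_1=e_1-y_2$, $u_2=e_2+y_1$, $y_1=Pu_1$, $y_2=Cu_2$) is well-posed if $(I+C(s)P(s))^{-1}$ exists and is proper, and stable iff $(I+C(s)P(s))^{-1}$ is proper with no poles in the closed right half-plane. *)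

theory Defs
  imports "HOL-Analysis.Analysis" "HOL-Computational_Algebra.Polynomial_Factorial"
          "HOL-Computational_Algebra.Normalized_Fraction" "HOL-Computational_Algebra.Field_as_Ring"
begin

text \<open>Real rational functions are elements of the field of fractions of real polynomials.
  Each one has a unique coprime representation num/den with normalized denominator
  (given by quot_of_fract).\<close>

definition rnum :: "real poly fract \<Rightarrow> real poly" where
  "rnum f = fst (quot_of_fract f)"

definition rden :: "real poly fract \<Rightarrow> real poly" where
  "rden f = snd (quot_of_fract f)"

definition rat_proper :: "real poly fract \<Rightarrow> bool" where
  "rat_proper f \<longleftrightarrow> degree (rnum f) \<le> degree (rden f)"

definition rat_pole :: "real poly fract \<Rightarrow> complex \<Rightarrow> bool" where
  "rat_pole f s \<longleftrightarrow> poly (map_poly complex_of_real (rden f)) s = 0"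

definition rat_eval :: "real poly fract \<Rightarrow> complex \<Rightarrow> complex" where
  "rat_eval f s = poly (map_poly complex_of_real (rnum f)) s / poly (map_poly complex_of_real (rden f)) s"

definition tf_eval :: "real poly fract ^'n^'m \<Rightarrow> complex \<Rightarrow> complex^'n^'m" where
  "tf_eval G s = (\<chi> i j. rat_eval (G $ i $ j) s)"

definition tf_proper :: "real poly fract ^'n^'m \<Rightarrow> bool" where
  "tf_proper G \<longleftrightarrow> (\<forall>i j. rat_proper (G $ i $ j))"

definition tf_poles :: "real poly fract ^'n^'m \<Rightarrow> complex set" where
  "tf_poles G = {s. \<exists>i j. rat_pole (G $ i $ j) s}"

definition tf_no_crhp_poles :: "real poly fract ^'n^'m \<Rightarrow> bool" where
  "tf_no_crhp_poles G \<longleftrightarrow> (\<forall>s. Re s \<ge> 0 \<longrightarrow> \<not> s \<in> tf_poles G)"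

text \<open>Singular angle theta(A) of a complex square matrix.  Re(x^* A x) is written out;
  norm on complex^'n is the Euclidean norm.\<close>
definition sangle :: "complex^'n^'n \<Rightarrow> real" where
  "sangle A = (if A = 0 then 0 else
     arccos (Inf {Re (\<Sum>i\<in>UNIV. cnj (x $ i) * (A *v x) $ i) / (norm x * norm (A *v x)) | x.
                   x \<noteq> 0 \<and> A *v x \<noteq> 0}))"

definition tf_at_pinf :: "real poly fract ^'n^'m \<Rightarrow> complex^'n^'m" where
  "tf_at_pinf G = Lim at_top (\<lambda>\<omega>::real. tf_eval G (\<i> * complex_of_real \<omega>))"

definition tf_at_minf :: "real poly fract ^'n^'m \<Rightarrow> complex^'n^'m" where
  "tf_at_minf G = Lim at_bot (\<lambda>\<omega>::real. tf_eval G (\<i> * complex_of_real \<omega>))"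

text \<open>H-infinity singular angle: sup over omega in the extended real line.\<close>
definition hinf_angle :: "real poly fract ^'n^'n \<Rightarrow> real" where
  "hinf_angle G = Sup ({sangle (tf_eval G (\<i> * complex_of_real \<omega>)) | \<omega>. True}
                       \<union> {sangle (tf_at_pinf G), sangle (tf_at_minf G)})"

definition well_posed :: "real poly fract ^'n^'n \<Rightarrow> real poly fract ^'n^'n \<Rightarrow> bool" where
  "well_posed P C \<longleftrightarrow> invertible (mat 1 + C ** P) \<and> tf_proper (matrix_inv (mat 1 + C ** P))"

end

(* The return difference F t s = det (I + t C(s) P(s)) is continuous in (t, s) on
   [0,1] x {Re s >= 0}, holomorphic in s on Re s > 0, and F 0 = 1.  If theta(A) + theta(B) < pi,
   then I + t A B is nonsingular for all t >= 0; hence F t does not vanish on the imaginary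
   axis, nor (because C P has a limit at infinity, by properness) outside a large disc,
   uniformly in t.  By Hurwitz's theorem no zero can then enter the closed right
   half-plane as t runs from 0 to 1.  At t = 1, Cramer's rule writes every entry of
   (I + C P)^-1 as a quotient whose denominator det (I + C P) does not vanish there, so the
   closed-loop map has no poles in the closed right half-plane. *)

theory Submission
  imports Defs "HOL-Complex_Analysis.Complex_Analysis"
begin

section \<open>Evaluating rational functions\<close>

abbreviation cpoly :: "real poly \<Rightarrow> complex poly" where
  "cpoly \<equiv> map_poly complex_of_real"

lemma map_poly_of_real_add:
  "map_poly of_real (p + q) = (map_poly of_real p + map_poly of_real q :: 'a::real_algebra_1 poly)"
  by (intro poly_eqI) (simp add: coeff_map_poly)

lemma map_poly_of_real_uminus:
  "map_poly of_real (- p) = (- map_poly of_real p :: 'a::real_algebra_1 poly)"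
  by (intro poly_eqI) (simp add: coeff_map_poly)

lemma map_poly_of_real_mult:
  "map_poly of_real (p * q) = (map_poly of_real p * map_poly of_real q :: 'a::{real_algebra_1,comm_ring_1} poly)"
proof (induction p)
  case (pCons a p)
  have "pCons a p * q = smult a q + pCons 0 (p * q)" by simp
  then show ?case using pCons by (simp add: map_poly_of_real_add map_poly_smult map_poly_pCons)
qed simp

definition rat_value :: "real poly fract \<Rightarrow> complex \<Rightarrow> complex \<Rightarrow> bool" where
  "rat_value f s z \<longleftrightarrow> \<not> rat_pole f s \<and> rat_eval f s = z"

lemma rat_value_iff:
  "rat_value f s z \<longleftrightarrow> poly (cpoly (rden f)) s \<noteq> 0 \<and> poly (cpoly (rnum f)) s / poly (cpoly (rden f)) s = z"
  by (simp add: rat_value_def rat_pole_def rat_eval_def)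

lemma Fract_rnum_rden: "Fract (rnum f) (rden f) = f" and rden_nonzero: "rden f \<noteq> 0"
  by (simp_all add: rnum_def rden_def)

text \<open>The reduced denominator divides \<open>b\<close>, so it does not vanish at \<open>s\<close> either.\<close>
lemma rat_value_FractI:
  assumes b: "b \<noteq> 0" and bs: "poly (cpoly b) s \<noteq> 0" and z: "poly (cpoly a) s / poly (cpoly b) s = z"
  shows "rat_value (Fract a b) s z"
proof -
  define f where "f = Fract a b"
  have "Fract (rnum f) (rden f) = Fract a b" by (simp add: Fract_rnum_rden f_def)
  then have eq: "rnum f * b = a * rden f" using b rden_nonzero by (simp add: eq_fract)
  have "coprime (rnum f) (rden f)" by (simp add: rnum_def rden_def coprime_quot_of_fract)
  moreover have "rden f dvd rnum f * b" using eq by simp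
  ultimately have "rden f dvd b" by (simp add: coprime_commute coprime_dvd_mult_right_iff)
  then obtain k where "b = rden f * k" by (auto elim: dvdE)
  then have "poly (cpoly b) s = poly (cpoly (rden f)) s * poly (cpoly k) s"
    by (simp add: map_poly_of_real_mult)
  with bs have "poly (cpoly (rden f)) s \<noteq> 0" by auto
  moreover have "poly (cpoly (rnum f)) s * poly (cpoly b) s = poly (cpoly a) s * poly (cpoly (rden f)) s"
    using arg_cong[OF eq, of "\<lambda>p. poly (cpoly p) s"] by (simp add: map_poly_of_real_mult)
  ultimately show ?thesis using bs z unfolding f_def[symmetric] rat_value_iff by (simp add: field_simps)
qed

lemma rat_value_0: "rat_value 0 s 0" and rat_value_1: "rat_value 1 s 1"
  by (simp_all add: rat_value_iff rnum_def rden_def)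

lemma rat_value_add:
  assumes "rat_value f s a" "rat_value g s b" shows "rat_value (f + g) s (a + b)"
proof -
  have "f + g = Fract (rnum f * rden g + rnum g * rden f) (rden f * rden g)"
    by (metis Fract_rnum_rden add_fract rden_nonzero)
  then show ?thesis
    by (simp only:, intro rat_value_FractI)
      (use assms in \<open>auto simp: rat_value_iff rden_nonzero map_poly_of_real_add map_poly_of_real_mult field_simps\<close>)
qed

lemma rat_value_uminus:
  assumes "rat_value f s a" shows "rat_value (- f) s (- a)"
proof -
  have "- f = Fract (- rnum f) (rden f)" by (metis Fract_rnum_rden minus_fract)
  then show ?thesis
    by (simp only:, intro rat_value_FractI)
      (use assms in \<open>auto simp: rat_value_iff rden_nonzero map_poly_of_real_uminus\<close>)
qed

lemma rat_value_mult:
  assumes "rat_value f s a" "rat_value g s b" shows "rat_value (f * g) s (a * b)"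
proof -
  have "f * g = Fract (rnum f * rnum g) (rden f * rden g)"
    by (metis Fract_rnum_rden mult_fract)
  then show ?thesis
    by (simp only:, intro rat_value_FractI)
      (use assms in \<open>auto simp: rat_value_iff rden_nonzero map_poly_of_real_mult\<close>)
qed

lemma rat_value_divide:
  assumes "rat_value f s a" "rat_value g s b" "b \<noteq> 0"
  shows "rat_value (f / g) s (a / b)"
proof -
  have "poly (cpoly (rnum g)) s \<noteq> 0" using assms by (auto simp: rat_value_iff)
  moreover have "f / g = Fract (rnum f * rden g) (rden f * rnum g)"
    by (metis Fract_rnum_rden divide_fract)
  ultimately show ?thesis
    by (simp only:, intro rat_value_FractI)
      (use assms in \<open>auto simp: rat_value_iff rden_nonzero map_poly_of_real_mult\<close>)
qed

lemma rat_value_sum: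
  assumes "\<And>x. x \<in> A \<Longrightarrow> rat_value (f x) s (g x)"
  shows "rat_value (sum f A) s (sum g A)"
  using assms by (induction A rule: infinite_finite_induct) (auto intro: rat_value_add rat_value_0)

lemma rat_value_prod:
  assumes "\<And>x. x \<in> A \<Longrightarrow> rat_value (f x) s (g x)"
  shows "rat_value (prod f A) s (prod g A)"
  using assms by (induction A rule: infinite_finite_induct) (auto intro: rat_value_mult rat_value_1)

lemma rat_value_det:
  fixes M :: "real poly fract^'n^'n" and A :: "complex^'n^'n"
  assumes "\<And>i j. rat_value (M $ i $ j) s (A $ i $ j)"
  shows "rat_value (det M) s (det A)"
proof -
  have "rat_value (of_int (sign p)) s (of_int (sign p))" for p :: "'n \<Rightarrow> 'n"
    by (auto simp: sign_def intro: rat_value_uminus rat_value_1)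
  then show ?thesis
    unfolding det_def by (intro rat_value_sum rat_value_mult rat_value_prod assms)
qed

lemma rat_eval_holomorphic_on:
  "(\<And>s. s \<in> S \<Longrightarrow> \<not> rat_pole f s) \<Longrightarrow> rat_eval f holomorphic_on S"
  unfolding rat_eval_def[abs_def] rat_pole_def by (intro holomorphic_intros poly_holomorphic_on) auto

lemma rat_eval_continuous_on:
  "(\<And>s. s \<in> S \<Longrightarrow> \<not> rat_pole f s) \<Longrightarrow> continuous_on S (rat_eval f)"
  by (intro holomorphic_on_imp_continuous_on rat_eval_holomorphic_on)

lemma poly_divide_tendsto_at_infinity:
  fixes p q :: "'a::real_normed_field poly"
  assumes "degree p \<le> degree q" "q \<noteq> 0"
  shows "\<exists>L. ((\<lambda>x. poly p x / poly q x) \<longlongrightarrow> L) at_infinity"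
proof (cases "degree p < degree q")
  case True
  then show ?thesis using poly_divide_tendsto_0_at_infinity by blast
next
  case False
  with assms have deg: "degree p = degree q" by simp
  have "((\<lambda>x. (poly p x / x ^ degree q) / (poly q x / x ^ degree q)) \<longlongrightarrow> lead_coeff p / lead_coeff q) at_infinity"
    using poly_divide_tendsto_aux[of p] poly_divide_tendsto_aux[of q] assms deg
    by (intro tendsto_divide) auto
  moreover have "\<forall>\<^sub>F x in at_infinity. (poly p x / x ^ degree q) / (poly q x / x ^ degree q) = poly p x / poly q x"
    by (rule eventually_at_infinityI[of 1]) auto
  ultimately have "((\<lambda>x. poly p x / poly q x) \<longlongrightarrow> lead_coeff p / lead_coeff q) at_infinity"
    by (rule Lim_transform_eventually)
  then show ?thesis by blast
qed

lemma rat_eval_tendsto_at_infinity: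
  "rat_proper f \<Longrightarrow> \<exists>L. (rat_eval f \<longlongrightarrow> L) at_infinity"
  unfolding rat_eval_def[abs_def] rat_proper_def
  by (intro poly_divide_tendsto_at_infinity) (auto simp: degree_map_poly map_poly_eq_0_iff rden_nonzero)

lemma tf_eval_tendsto_at_infinity:
  fixes G :: "real poly fract^'n^'m"
  assumes "tf_proper G"
  shows "\<exists>L. (tf_eval G \<longlongrightarrow> L) at_infinity"
proof -
  have "\<forall>i j. \<exists>L. (rat_eval (G $ i $ j) \<longlongrightarrow> L) at_infinity"
    using assms rat_eval_tendsto_at_infinity unfolding tf_proper_def by blast
  then obtain L where "\<And>i j. (rat_eval (G $ i $ j) \<longlongrightarrow> L i j) at_infinity" by metis
  then have "(tf_eval G \<longlongrightarrow> (\<chi> i j. L i j)) at_infinity"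
    by (intro vec_tendstoI) (simp add: tf_eval_def)
  then show ?thesis by blast
qed

lemma filterlim_imaginary_axis_at_infinity:
  "filterlim (\<lambda>\<omega>::real. \<i> * complex_of_real \<omega>) at_infinity at_top"
  unfolding filterlim_at_infinity_conv_norm_at_top
  by (simp add: norm_mult filterlim_abs_real filterlim_ident)

lemma tf_at_pinf_eq:
  fixes G :: "real poly fract^'n^'m"
  assumes "(tf_eval G \<longlongrightarrow> L) at_infinity"
  shows "tf_at_pinf G = L"
  unfolding tf_at_pinf_def
  using filterlim_compose[OF assms filterlim_imaginary_axis_at_infinity]
  by (intro tendsto_Lim) (auto simp: o_def)

section \<open>Singular angles\<close>

text \<open>Viewing \<open>complex^'n\<close> as a real inner product space, \<open>Re (x\<^sup>* y) = inner x y\<close>.\<close>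

definition sangle_cosines :: "complex^'n^'n \<Rightarrow> real set" where
  "sangle_cosines A = {inner x (A *v x) / (norm x * norm (A *v x)) | x. x \<noteq> 0 \<and> A *v x \<noteq> 0}"

lemma Re_sum_cnj_mult_eq_inner:
  fixes x y :: "complex^'n"
  shows "Re (\<Sum>i\<in>UNIV. cnj (x $ i) * y $ i) = inner x y"
  by (simp add: inner_vec_def inner_complex_def Re_sum)

lemma sangle_eq_arccos_Inf:
  "sangle A = (if A = 0 then 0 else arccos (Inf (sangle_cosines A)))"
  by (simp only: sangle_def sangle_cosines_def Re_sum_cnj_mult_eq_inner)

lemma cosine_bounds:
  fixes x y :: "'a::real_inner"
  assumes "x \<noteq> 0" "y \<noteq> 0"
  shows "-1 \<le> inner x y / (norm x * norm y)" "inner x y / (norm x * norm y) \<le> 1"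
  using Cauchy_Schwarz_ineq2[of x y] assms by (auto simp: divide_le_eq le_divide_eq abs_le_iff)

lemma sangle_cosines_nonempty: "A \<noteq> 0 \<Longrightarrow> sangle_cosines A \<noteq> {}"
  unfolding sangle_cosines_def
  by (metis (mono_tags, lifting) empty_Collect_eq matrix_eq matrix_vector_mult_0 matrix_vector_mult_0_right)

lemma Inf_sangle_cosines_bounds:
  assumes "c \<in> sangle_cosines A"
  shows "-1 \<le> Inf (sangle_cosines A)" "Inf (sangle_cosines A) \<le> c" "c \<le> 1"
proof -
  have bounds: "-1 \<le> r \<and> r \<le> 1" if "r \<in> sangle_cosines A" for r
    using that cosine_bounds unfolding sangle_cosines_def by blast
  show "-1 \<le> Inf (sangle_cosines A)" using assms bounds by (intro cInf_greatest) auto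
  show "Inf (sangle_cosines A) \<le> c" using assms bounds by (intro cInf_lower bdd_belowI) auto
  show "c \<le> 1" using assms bounds by blast
qed

lemma arccos_le_sangle:
  assumes "x \<noteq> 0" "A *v x \<noteq> 0"
  shows "arccos (inner x (A *v x) / (norm x * norm (A *v x))) \<le> sangle A"
proof -
  have "inner x (A *v x) / (norm x * norm (A *v x)) \<in> sangle_cosines A"
    using assms unfolding sangle_cosines_def by blast
  moreover have "A \<noteq> 0" using assms by auto
  ultimately show ?thesis
    by (simp add: sangle_eq_arccos_Inf arccos_le_arccos Inf_sangle_cosines_bounds)
qed

lemma sangle_le_pi: "sangle A \<le> pi"
proof (cases "A = 0")
  case False
  then obtain c where "c \<in> sangle_cosines A" using sangle_cosines_nonempty by blast
  then have "-1 \<le> Inf (sangle_cosines A)" "Inf (sangle_cosines A) \<le> 1"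
    using Inf_sangle_cosines_bounds by (blast, fastforce)
  with False show ?thesis by (simp add: sangle_eq_arccos_Inf arccos_ubound)
qed (simp add: sangle_def)

lemma scaleR_matrix_vector_mult:
  fixes A :: "'a::real_algebra_1^'n^'m"
  shows "(c *\<^sub>R A) *v x = c *\<^sub>R (A *v x)"
  by (simp add: vec_eq_iff matrix_vector_mult_def scaleR_sum_right)

lemma matrix_vector_mult_scaleR_right:
  fixes A :: "'a::real_algebra_1^'n^'m"
  shows "A *v (c *\<^sub>R x) = c *\<^sub>R (A *v x)"
  by (simp add: vec_eq_iff matrix_vector_mult_def scaleR_sum_right)

text \<open>If \<open>(I + t A B) y = 0\<close> with \<open>y \<noteq> 0\<close>, then \<open>A\<close> maps \<open>t B y\<close> to \<open>-y\<close>: the angle realised by \<open>A\<close>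
  at \<open>t B y\<close> is the supplement of the one realised by \<open>B\<close> at \<open>y\<close>.\<close>
lemma det_mat_1_plus_scaleR_mult_nonzero:
  fixes A B :: "complex^'n^'n"
  assumes "0 \<le> t" and angle: "sangle A + sangle B < pi"
  shows "det (mat 1 + t *\<^sub>R (A ** B)) \<noteq> 0"
proof
  assume "det (mat 1 + t *\<^sub>R (A ** B)) = 0"
  then obtain y where "y \<noteq> 0" and "(mat 1 + t *\<^sub>R (A ** B)) *v y = 0"
    by (metis invertible_det_nz invertible_left_inverse matrix_left_invertible_ker)
  then have y: "y \<noteq> 0" and ABy: "t *\<^sub>R (A *v (B *v y)) = - y"
    by (simp_all add: matrix_vector_mult_add_rdistrib scaleR_matrix_vector_mult
        matrix_vector_mul_assoc eq_neg_iff_add_eq_0 add.commute)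
  define v where "v = B *v y"
  have "t \<noteq> 0" "v \<noteq> 0" using ABy y by (auto simp: v_def)
  with \<open>0 \<le> t\<close> have t: "t > 0" by simp
  define c where "c = inner y v / (norm y * norm v)"
  have "arccos c \<le> sangle B" using arccos_le_sangle[of y B] y \<open>v \<noteq> 0\<close> by (simp add: c_def v_def)
  moreover have "A *v (t *\<^sub>R v) = - y" using ABy by (simp add: v_def matrix_vector_mult_scaleR_right)
  then have "arccos (- c) \<le> sangle A"
    using arccos_le_sangle[of "t *\<^sub>R v" A] t y \<open>v \<noteq> 0\<close>
    by (simp add: c_def inner_commute mult.commute mult.left_commute)
  moreover have "arccos (- c) = pi - arccos c"
    using cosine_bounds[OF y \<open>v \<noteq> 0\<close>] by (simp add: c_def arccos_minus)
  ultimately show False using angle by linarith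
qed

section \<open>Hurwitz's theorem along a homotopy\<close>

lemma uniform_limit_continuous_on_Times:
  fixes G :: "'a::metric_space \<times> 'b::metric_space \<Rightarrow> 'c::metric_space"
  assumes "continuous_on (T \<times> K) G" "compact T" "compact K"
    and "t \<longlonglongrightarrow> \<tau>" "\<And>k. t k \<in> T" "\<tau> \<in> T"
  shows "uniform_limit K (\<lambda>k z. G (t k, z)) (\<lambda>z. G (\<tau>, z)) sequentially"
  unfolding uniform_limit_iff
proof (intro allI impI)
  fix e :: real assume "e > 0"
  have "uniformly_continuous_on (T \<times> K) G"
    using assms by (intro compact_uniformly_continuous compact_Times)
  then obtain d where "d > 0"
    and d: "\<And>p p'. p \<in> T \<times> K \<Longrightarrow> p' \<in> T \<times> K \<Longrightarrow> dist p' p < d \<Longrightarrow> dist (G p') (G p) < e"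
    using \<open>e > 0\<close> unfolding uniformly_continuous_on_def by metis
  have "\<forall>\<^sub>F k in sequentially. dist (t k) \<tau> < d" using assms(4) \<open>d > 0\<close> by (rule tendstoD)
  then show "\<forall>\<^sub>F k in sequentially. \<forall>z\<in>K. dist (G (t k, z)) (G (\<tau>, z)) < e"
    by eventually_elim (use assms(5,6) in \<open>auto intro!: d simp: dist_Pair_Pair\<close>)
qed

lemma Hurwitz_no_zeros_parametric:
  fixes F :: "real \<Rightarrow> complex \<Rightarrow> complex"
  assumes S: "open S" "connected S" and "a < \<tau>"
    and cont: "continuous_on ({a..\<tau>} \<times> S) (\<lambda>(t, z). F t z)"
    and holo: "\<And>t. t \<in> {a..\<tau>} \<Longrightarrow> F t holomorphic_on S"
    and nz: "\<And>t z. t \<in> {a..<\<tau>} \<Longrightarrow> z \<in> S \<Longrightarrow> F t z \<noteq> 0"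
    and nonconst: "\<not> F \<tau> constant_on S" and "z \<in> S"
  shows "F \<tau> z \<noteq> 0"
proof -
  define t where "t k = \<tau> - (\<tau> - a) / real (Suc k)" for k
  have t_in: "t k \<in> {a..<\<tau>}" for k
    using \<open>a < \<tau>\<close> by (auto simp: t_def field_simps intro: mult_right_mono)
  have "(\<lambda>k. (\<tau> - a) / real (Suc k)) \<longlonglongrightarrow> 0"
    using LIMSEQ_Suc[OF lim_const_over_n] by simp
  then have "t \<longlonglongrightarrow> \<tau> - 0" unfolding t_def by (intro tendsto_intros)
  then have lim: "t \<longlonglongrightarrow> \<tau>" by simp
  show ?thesis
  proof (rule Hurwitz_no_zeros[OF S, of "\<lambda>k. F (t k)" "F \<tau>"])
    fix K assume "compact K" "K \<subseteq> S"
    then have "continuous_on ({a..\<tau>} \<times> K) (\<lambda>(t, z). F t z)"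
      by (intro continuous_on_subset[OF cont]) auto
    moreover have "t k \<in> {a..\<tau>}" for k using t_in[of k] by simp
    ultimately have "uniform_limit K (\<lambda>k z. (\<lambda>(t, z). F t z) (t k, z)) (\<lambda>z. (\<lambda>(t, z). F t z) (\<tau>, z)) sequentially"
      using \<open>a < \<tau>\<close> by (intro uniform_limit_continuous_on_Times[OF _ compact_Icc \<open>compact K\<close> lim]) auto
    then show "uniform_limit K (\<lambda>k. F (t k)) (F \<tau>) sequentially" by simp
  qed (use t_in nz \<open>a < \<tau>\<close> in \<open>auto simp: less_imp_le intro!: holo nonconst \<open>z \<in> S\<close>\<close>)
qed

text \<open>Zeros of \<open>F t\<close> in the closed right half-plane stay in a compact set, so if \<open>F 1\<close> had one,
  there would be a first time \<open>\<tau> > 0\<close> with a zero; it lies off the imaginary axis, contradicting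
  the parametric Hurwitz theorem on the open half-plane.\<close>
lemma right_half_plane_homotopy_no_zeros:
  fixes F :: "real \<Rightarrow> complex \<Rightarrow> complex"
  assumes cont: "continuous_on ({0..1} \<times> {s. 0 \<le> Re s}) (\<lambda>(t, s). F t s)"
    and holo: "\<And>t. t \<in> {0..1} \<Longrightarrow> F t holomorphic_on {s. 0 < Re s}"
    and start: "\<And>s. 0 \<le> Re s \<Longrightarrow> F 0 s \<noteq> 0"
    and axis: "\<And>t s. t \<in> {0..1} \<Longrightarrow> Re s = 0 \<Longrightarrow> F t s \<noteq> 0"
    and far: "\<And>t s. t \<in> {0..1} \<Longrightarrow> 0 \<le> Re s \<Longrightarrow> R \<le> norm s \<Longrightarrow> F t s \<noteq> 0"
    and "0 \<le> Re s"
  shows "F 1 s \<noteq> 0"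
proof
  assume "F 1 s = 0"
  define K where "K = {s. 0 \<le> Re s} \<inter> cball 0 R"
  define Z where "Z = {p \<in> {0..1} \<times> K. (\<lambda>(t, s). F t s) p = 0}"
  have "compact K" unfolding K_def by (intro closed_Int_compact closed_halfspace_Re_ge compact_cball)
  have zeros_in_Z: "(t, z) \<in> Z" if "t \<in> {0..1}" "0 \<le> Re z" "F t z = 0" for t z
    using that far[of t z] by (force simp: Z_def K_def)
  have "closed Z" unfolding Z_def
    using \<open>compact K\<close> by (intro continuous_closed_preimage_constant continuous_on_subset[OF cont])
      (auto simp: K_def intro: closed_Times compact_imp_closed)
  moreover have "Z = ({0..1} \<times> K) \<inter> Z" by (auto simp: Z_def)
  ultimately have "compact Z" by (metis compact_Int_closed compact_Icc compact_Times \<open>compact K\<close>)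
  then have "compact (fst ` Z)" by (intro compact_continuous_image continuous_intros)
  moreover have "(1, s) \<in> Z" using zeros_in_Z \<open>F 1 s = 0\<close> \<open>0 \<le> Re s\<close> by simp
  then have "fst ` Z \<noteq> {}" by force
  ultimately obtain \<tau> where "\<tau> \<in> fst ` Z" and first: "\<And>t. t \<in> fst ` Z \<Longrightarrow> \<tau> \<le> t"
    using compact_attains_inf by metis
  then obtain s1 where "(\<tau>, s1) \<in> Z" by force
  then have \<tau>: "\<tau> \<in> {0..1}" and "F \<tau> s1 = 0" and "0 \<le> Re s1" by (auto simp: Z_def K_def)
  with start axis have "\<tau> \<noteq> 0" "Re s1 \<noteq> 0" by auto
  with \<tau> \<open>0 \<le> Re s1\<close> have "0 < \<tau>" "0 < Re s1" by auto
  have nonconst: "\<not> F \<tau> constant_on {s. 0 < Re s}"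
  proof
    assume "F \<tau> constant_on {s. 0 < Re s}"
    moreover define x where "x = complex_of_real (\<bar>R\<bar> + 1)"
    moreover have "0 < Re x" by (simp add: x_def add_nonneg_pos)
    ultimately have "F \<tau> x = F \<tau> s1" using \<open>0 < Re s1\<close> unfolding constant_on_def by force
    moreover have "F \<tau> x \<noteq> 0" using far[OF \<tau>, of x] by (simp add: x_def)
    ultimately show False using \<open>F \<tau> s1 = 0\<close> by simp
  qed
  have "F \<tau> s1 \<noteq> 0"
  proof (rule Hurwitz_no_zeros_parametric[where F = F, OF open_halfspace_Re_gt _ \<open>0 < \<tau>\<close>])
    show "connected {s. 0 < Re s}" by (intro convex_connected convex_halfspace_Re_gt)
    show "continuous_on ({0..\<tau>} \<times> {s. 0 < Re s}) (\<lambda>(t, z). F t z)"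
      using \<tau> by (intro continuous_on_subset[OF cont]) auto
    show "F t holomorphic_on {s. 0 < Re s}" if "t \<in> {0..\<tau>}" for t
      using that \<tau> by (intro holo) auto
    show "F t z \<noteq> 0" if "t \<in> {0..<\<tau>}" "z \<in> {s. 0 < Re s}" for t z
      using that \<tau> zeros_in_Z[of t z] first[of t] by force
  qed (use nonconst \<open>0 < Re s1\<close> in simp_all)
  with \<open>F \<tau> s1 = 0\<close> show False by simp
qed

section \<open>The return difference\<close>

lemma continuous_on_det:
  fixes M :: "'a::topological_space \<Rightarrow> 'b::real_normed_field^'n^'n"
  assumes "\<And>i j. continuous_on X (\<lambda>x. M x $ i $ j)"
  shows "continuous_on X (\<lambda>x. det (M x))"
  unfolding det_def by (intro continuous_intros continuous_on_prod assms)

lemma holomorphic_on_det: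
  fixes M :: "complex \<Rightarrow> complex^'n^'n"
  assumes "\<And>i j. (\<lambda>x. M x $ i $ j) holomorphic_on X"
  shows "(\<lambda>x. det (M x)) holomorphic_on X"
  unfolding det_def by (intro holomorphic_intros holomorphic_on_prod assms)

lemma mat_1_plus_scaleR_nth:
  fixes M :: "'a::real_algebra_1^'n^'n"
  shows "(mat 1 + t *\<^sub>R M) $ i $ j = (if i = j then 1 else 0) + of_real t * M $ i $ j"
  unfolding vector_add_component vector_scaleR_component by (simp add: mat_def scaleR_conv_of_real)

lemma eventually_det_mat_1_plus_scaleR_nonzero:
  fixes G :: "'a \<Rightarrow> complex^'n^'n"
  assumes "(G \<longlongrightarrow> L) F" and nz: "\<And>t. t \<in> {0..1} \<Longrightarrow> det (mat 1 + t *\<^sub>R L) \<noteq> 0"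
  shows "\<forall>\<^sub>F x in F. \<forall>t\<in>{0..1}. det (mat 1 + t *\<^sub>R G x) \<noteq> 0"
proof -
  define Z where "Z = {p \<in> {0..1} \<times> (UNIV :: (complex^'n^'n) set). det (mat 1 + fst p *\<^sub>R snd p) = 0}"
  have cont: "continuous_on UNIV (\<lambda>p::real \<times> (complex^'n^'n). det (mat 1 + fst p *\<^sub>R snd p))"
    unfolding mat_1_plus_scaleR_nth
    by (intro continuous_on_det continuous_intros)
  have "closed Z" unfolding Z_def
    by (intro continuous_closed_preimage_constant continuous_on_subset[OF cont subset_UNIV]
        closed_Times closed_atLeastAtMost closed_UNIV)
  moreover have "({0..1} \<times> {L}) \<inter> Z = {}" using nz by (auto simp: Z_def)
  ultimately obtain \<delta> where "\<delta> > 0" and \<delta>: "\<forall>p\<in>{0..1} \<times> {L}. \<forall>q\<in>Z. \<delta> \<le> dist p q"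
    using separate_compact_closed[OF compact_Times[OF compact_Icc compact_sing]] by blast
  have "\<forall>\<^sub>F x in F. dist (G x) L < \<delta>" using assms(1) \<open>\<delta> > 0\<close> by (rule tendstoD)
  then show ?thesis
  proof eventually_elim
    case (elim x)
    have "(t, G x) \<notin> Z" if "t \<in> {0..1}" for t
    proof
      assume "(t, G x) \<in> Z"
      then have "\<delta> \<le> dist (t, L) (t, G x)" using \<delta> that by blast
      with elim show False by (simp add: dist_Pair_Pair dist_commute)
    qed
    then show ?case by (auto simp: Z_def)
  qed
qed

lemma tendsto_matrix_mult:
  fixes f g :: "'a \<Rightarrow> 'b::real_normed_field^'n^'n"
  assumes "(f \<longlongrightarrow> A) F" "(g \<longlongrightarrow> B) F"
  shows "((\<lambda>x. f x ** g x) \<longlongrightarrow> A ** B) F"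
proof (intro vec_tendstoI)
  show "((\<lambda>x. (f x ** g x) $ i $ j) \<longlongrightarrow> (A ** B) $ i $ j) F" for i j
    unfolding matrix_matrix_mult_def vec_lambda_beta by (intro tendsto_intros assms)
qed

lemma continuous_on_det_mat_1_plus_scaleR_mult:
  fixes A B :: "'a::topological_space \<Rightarrow> complex^'n^'n"
  assumes A: "\<And>i j. continuous_on S (\<lambda>s. A s $ i $ j)" and B: "\<And>i j. continuous_on S (\<lambda>s. B s $ i $ j)"
  shows "continuous_on (T \<times> S) (\<lambda>(t, s). det (mat 1 + t *\<^sub>R (A s ** B s)))"
proof -
  have "continuous_on (T \<times> S) (\<lambda>p. det (mat 1 + fst p *\<^sub>R (A (snd p) ** B (snd p))))"
    unfolding mat_1_plus_scaleR_nth matrix_matrix_mult_def vec_lambda_beta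
    by (intro continuous_on_det continuous_intros continuous_on_compose2[OF A continuous_on_snd]
        continuous_on_compose2[OF B continuous_on_snd]) auto
  then show ?thesis by (simp add: case_prod_beta')
qed

lemma holomorphic_on_det_mat_1_plus_scaleR_mult:
  fixes A B :: "complex \<Rightarrow> complex^'n^'n"
  assumes "\<And>i j. (\<lambda>s. A s $ i $ j) holomorphic_on S" "\<And>i j. (\<lambda>s. B s $ i $ j) holomorphic_on S"
  shows "(\<lambda>s. det (mat 1 + t *\<^sub>R (A s ** B s))) holomorphic_on S"
proof (rule holomorphic_on_det)
  show "(\<lambda>s. (mat 1 + t *\<^sub>R (A s ** B s)) $ i $ j) holomorphic_on S" for i j
    unfolding mat_1_plus_scaleR_nth matrix_matrix_mult_def vec_lambda_beta
    by (intro holomorphic_intros assms)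
qed

lemma rat_value_tf_eval:
  "tf_no_crhp_poles G \<Longrightarrow> 0 \<le> Re s \<Longrightarrow> rat_value (G $ i $ j) s (tf_eval G s $ i $ j)"
  by (auto simp: tf_no_crhp_poles_def tf_poles_def rat_value_def tf_eval_def)

lemma tf_eval_continuous_on:
  "tf_no_crhp_poles G \<Longrightarrow> continuous_on {s. 0 \<le> Re s} (\<lambda>s. tf_eval G s $ i $ j)"
  unfolding tf_eval_def vec_lambda_beta
  by (intro rat_eval_continuous_on) (auto simp: tf_no_crhp_poles_def tf_poles_def)

lemma tf_eval_holomorphic_on:
  "tf_no_crhp_poles G \<Longrightarrow> (\<lambda>s. tf_eval G s $ i $ j) holomorphic_on {s. 0 < Re s}"
  unfolding tf_eval_def vec_lambda_beta
  by (intro rat_eval_holomorphic_on) (auto simp: tf_no_crhp_poles_def tf_poles_def)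

lemma sangle_le_hinf_angle:
  fixes G :: "real poly fract^'n^'n"
  shows "sangle (tf_eval G (\<i> * complex_of_real \<omega>)) \<le> hinf_angle G"
    and "sangle (tf_at_pinf G) \<le> hinf_angle G"
proof -
  have "bdd_above ({sangle (tf_eval G (\<i> * complex_of_real \<omega>)) | \<omega>. True}
                   \<union> {sangle (tf_at_pinf G), sangle (tf_at_minf G)})"
    using sangle_le_pi by (intro bdd_aboveI[of _ pi]) blast
  then show "sangle (tf_eval G (\<i> * complex_of_real \<omega>)) \<le> hinf_angle G"
    and "sangle (tf_at_pinf G) \<le> hinf_angle G"
    unfolding hinf_angle_def by (auto intro: cSup_upper)
qed

lemma det_mat_1_plus_tf_eval_nonzero:
  fixes P C :: "real poly fract^'n^'n"
  assumes "tf_proper P" "tf_proper C" and poles: "tf_no_crhp_poles P" "tf_no_crhp_poles C"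
    and angle: "hinf_angle P + hinf_angle C < pi" and "0 \<le> Re s"
  shows "det (mat 1 + tf_eval C s ** tf_eval P s) \<noteq> 0"
proof -
  define F where "F t s = det (mat 1 + t *\<^sub>R (tf_eval C s ** tf_eval P s))" for t s
  have angle_sum: "sangle A + sangle B < pi"
    if "sangle A \<le> hinf_angle C" "sangle B \<le> hinf_angle P" for A B :: "complex^'n^'n"
    using that angle by linarith
  obtain Lc Lp where Lc: "(tf_eval C \<longlongrightarrow> Lc) at_infinity" and Lp: "(tf_eval P \<longlongrightarrow> Lp) at_infinity"
    using tf_eval_tendsto_at_infinity assms(1,2) by metis
  have "\<forall>\<^sub>F s in at_infinity. \<forall>t\<in>{0..1}. F t s \<noteq> 0"
    unfolding F_def
  proof (rule eventually_det_mat_1_plus_scaleR_nonzero[OF tendsto_matrix_mult[OF Lc Lp]])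
    show "det (mat 1 + t *\<^sub>R (Lc ** Lp)) \<noteq> 0" if "t \<in> {0..1}" for t
      using that sangle_le_hinf_angle(2)[of C] sangle_le_hinf_angle(2)[of P]
      by (intro det_mat_1_plus_scaleR_mult_nonzero angle_sum)
        (auto simp: tf_at_pinf_eq[OF Lc] tf_at_pinf_eq[OF Lp])
  qed
  then obtain R where far: "\<And>s t. R \<le> norm s \<Longrightarrow> t \<in> {0..1} \<Longrightarrow> F t s \<noteq> 0"
    unfolding eventually_at_infinity by blast
  have "F 1 s \<noteq> 0"
  proof (rule right_half_plane_homotopy_no_zeros[where F = F and R = R])
    show "continuous_on ({0..1} \<times> {s. 0 \<le> Re s}) (\<lambda>(t, s). F t s)"
      unfolding F_def
      by (intro continuous_on_det_mat_1_plus_scaleR_mult tf_eval_continuous_on poles)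
    show "F t holomorphic_on {s. 0 < Re s}" for t
      unfolding F_def[abs_def]
      by (intro holomorphic_on_det_mat_1_plus_scaleR_mult tf_eval_holomorphic_on poles)
    show "F t s \<noteq> 0" if "t \<in> {0..1}" "Re s = 0" for t s
    proof -
      have "s = \<i> * complex_of_real (Im s)" using that by (simp add: complex_eq_iff)
      then show ?thesis
        using that sangle_le_hinf_angle(1)[of C "Im s"] sangle_le_hinf_angle(1)[of P "Im s"]
        unfolding F_def by (intro det_mat_1_plus_scaleR_mult_nonzero angle_sum) auto
    qed
  qed (use far \<open>0 \<le> Re s\<close> in \<open>auto simp: F_def\<close>)
  then show ?thesis by (simp add: F_def)
qed

lemma rat_value_mat_1_plus_mult:
  fixes M N :: "real poly fract^'n^'n"
  assumes "\<And>i j. rat_value (M $ i $ j) s (A $ i $ j)" "\<And>i j. rat_value (N $ i $ j) s (B $ i $ j)"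
  shows "rat_value ((mat 1 + M ** N) $ i $ j) s ((mat 1 + A ** B) $ i $ j)"
  unfolding mat_def matrix_matrix_mult_def vector_add_component vec_lambda_beta
  by (intro rat_value_add rat_value_sum rat_value_mult assms) (simp add: rat_value_0 rat_value_1)

lemma matrix_inv_right:
  fixes M :: "'a::field^'n^'n"
  assumes "invertible M" shows "M ** matrix_inv M = mat 1"
  using assms unfolding invertible_def matrix_inv_def by (rule someI2_ex) auto

lemma matrix_inv_no_rat_pole:
  fixes M :: "real poly fract^'n^'n" and A :: "complex^'n^'n"
  assumes "invertible M" and M: "\<And>i j. rat_value (M $ i $ j) s (A $ i $ j)" and "det A \<noteq> 0"
  shows "\<not> rat_pole (matrix_inv M $ i $ j) s"
proof -
  define e :: "real poly fract^'n" where "e = (\<chi> k. mat 1 $ k $ j)"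
  define Mi where "Mi = (\<chi> k l. if l = i then e $ k else M $ k $ l)"
  define Ai where "Ai = (\<chi> k l. if l = i then (mat 1 :: complex^'n^'n) $ k $ j else A $ k $ l)"
  have "det M \<noteq> 0" using assms(1) invertible_det_nz by blast
  moreover have "M *v (\<chi> k. matrix_inv M $ k $ j) = e"
    using matrix_inv_right[OF assms(1)]
    by (simp add: e_def vec_eq_iff matrix_vector_mult_def matrix_matrix_mult_def)
  ultimately have "matrix_inv M $ i $ j = det Mi / det M"
    unfolding Mi_def by (subst (asm) cramer) (auto simp: vec_eq_iff)
  moreover have "rat_value (Mi $ k $ l) s (Ai $ k $ l)" for k l
    using M by (simp add: Mi_def Ai_def e_def mat_def rat_value_0 rat_value_1)
  ultimately have "rat_value (matrix_inv M $ i $ j) s (det Ai / det A)"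
    by (simp add: rat_value_divide rat_value_det M \<open>det A \<noteq> 0\<close>)
  then show ?thesis by (simp add: rat_value_def)
qed

theorem corollary3:
  fixes P C :: "real poly fract ^'n^'n"
  assumes "tf_proper P" and "tf_proper C"
    and "tf_no_crhp_poles P" and "tf_no_crhp_poles C"
    and "well_posed P C"
    and "hinf_angle P + hinf_angle C < pi"
  shows "tf_proper (matrix_inv (mat 1 + C ** P)) \<and> tf_no_crhp_poles (matrix_inv (mat 1 + C ** P))"
proof
  show "tf_proper (matrix_inv (mat 1 + C ** P))" using assms(5) unfolding well_posed_def by simp
  have "\<not> rat_pole (matrix_inv (mat 1 + C ** P) $ i $ j) s" if "0 \<le> Re s" for s i j
  proof (rule matrix_inv_no_rat_pole)
    show "invertible (mat 1 + C ** P)" using assms(5) unfolding well_posed_def by simp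
    show "rat_value ((mat 1 + C ** P) $ k $ l) s ((mat 1 + tf_eval C s ** tf_eval P s) $ k $ l)" for k l
      using assms(3,4) that by (intro rat_value_mat_1_plus_mult rat_value_tf_eval)
    show "det (mat 1 + tf_eval C s ** tf_eval P s) \<noteq> 0"
      using assms that by (intro det_mat_1_plus_tf_eval_nonzero)
  qed
  then show "tf_no_crhp_poles (matrix_inv (mat 1 + C ** P))"
    unfolding tf_no_crhp_poles_def tf_poles_def by blast
qed

end
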